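(* Let $n\ge 3$ and $s,t\in\{-1,1\}^{n}$ with $s\neq t$ and $\sharp_{n}(s)=\sharp_{n}(t)$. Assume $(s_1,s_2)=(1,-1)$ and $(t_1,t_2)=(-1,1)$. If \[ \sum_{k=1}^{n}s_{k}\sharp_{k}(s)>\sum_{k=1}^{n}t_{k}\sharp_{k}(t),\] then the curve $c_{s,t}$ meets $R=\{(x,y)\in(0,1)^2: x+y>1\}$, i.e. there is $(x,y)\in(0,1)^2$ with $x+y>1$ and \[ \sum_{k=1}^{n}\Big(s_{k}x^{\sharp_{k}(s)}y^{\tilde\sharp_{k}(s)}-t_{k}x^{\sharp_{k}(t)}y^{\tilde\sharp_{k}(t)}\Big)=0 .\]
   Context: For $r\in\{-1,1\}^{n}$ and $1\le k\le n$, $\sharp_{k}(r)$ is the number of entries of $(r_1,\dots,r_k)$ equal to $1$ and $\tilde\sharp_{k}(r)=k-\sharp_{k}(r)$. The curve $c_{s,t}$ is the zero set in $\mathbb{R}^2$ of $\sum_{k=1}^{n}(s_{k}x^{\sharp_{k}(s)}y^{\tilde\sharp_{k}(s)}-t_{k}x^{\sharp_{k}(t)}y^{\tilde\sharp_{k}(t)})$. *)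

theory Defs
  imports Complex_Main
begin

text \<open>Sign vectors r in {-1,1}^n are represented as functions nat => int,
  with entries r 1, ..., r n (1-based indexing); values outside 1..n are irrelevant.\<close>

definition sign_vec :: "nat \<Rightarrow> (nat \<Rightarrow> int) \<Rightarrow> bool" where
  "sign_vec n r \<longleftrightarrow> (\<forall>i\<in>{1..n}. r i = 1 \<or> r i = -1)"

definition sharp :: "nat \<Rightarrow> (nat \<Rightarrow> int) \<Rightarrow> nat" where
  "sharp k r = card {i \<in> {1..k}. r i = 1}"

definition tsharp :: "nat \<Rightarrow> (nat \<Rightarrow> int) \<Rightarrow> nat" where
  "tsharp k r = k - sharp k r"

definition curve_poly :: "nat \<Rightarrow> (nat \<Rightarrow> int) \<Rightarrow> (nat \<Rightarrow> int) \<Rightarrow> real \<Rightarrow> real \<Rightarrow> real" where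
  "curve_poly n s t x y =
     (\<Sum>k=1..n. of_int (s k) * x ^ sharp k s * y ^ tsharp k s
              - of_int (t k) * x ^ sharp k t * y ^ tsharp k t)"

definition curve :: "nat \<Rightarrow> (nat \<Rightarrow> int) \<Rightarrow> (nat \<Rightarrow> int) \<Rightarrow> (real \<times> real) set" where
  "curve n s t = {(x, y). curve_poly n s t x y = 0}"

end

theory Submission
  imports Defs
begin

(* Write F for the curve polynomial. On the edge y = 1 of R, F(x,1) is the difference of two sums of
   signed monomials; it vanishes at x = 1 because sharp n s = sharp n t, and its derivative there is
   the difference of the two weighted sums in the hypothesis, hence positive. So F(x0,1) < 0 for some
   x0 < 1. At the vertex (1,0) every term with k >= 2 carries a positive power of y, since s 2 = -1
   and t 1 = -1, so F(1,0) = s 1 = 1. The open segment from (x0,1) to (1,0) lies in R (there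
   x + y = 1 + (1 - u) x0), and the intermediate value theorem gives a zero of F on it. *)

lemma sharp_Suc: "sharp (Suc k) r = sharp k r + (if r (Suc k) = 1 then 1 else 0)"
proof -
  have "{i \<in> {1..Suc k}. r i = 1} =
      {i \<in> {1..k}. r i = 1} \<union> (if r (Suc k) = 1 then {Suc k} else {})"
    by (auto simp: le_Suc_eq)
  then show ?thesis
    unfolding sharp_def by (auto simp: card_insert_if)
qed

lemma sharp_1: "sharp 1 r = (if r 1 = 1 then 1 else 0)"
  using sharp_Suc[of 0 r] by (simp add: sharp_def)

lemma tsharp_pos:
  assumes "i \<in> {1..k}" and "r i \<noteq> 1"
  shows "0 < tsharp k r"
proof -
  have "{j \<in> {1..k}. r j = 1} \<subseteq> {1..k} - {i}"
    using assms(2) by auto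
  then have "sharp k r \<le> card ({1..k} - {i})"
    unfolding sharp_def by (rule card_mono[rotated]) simp
  with assms(1) show ?thesis
    unfolding tsharp_def by simp arith
qed

lemma sum_sign_vec:
  assumes "sign_vec k r"
  shows "(\<Sum>i=1..k. r i) = 2 * int (sharp k r) - int k"
  using assms
proof (induction k)
  case 0
  then show ?case by (simp add: sharp_def)
next
  case (Suc k)
  then have "sign_vec k r" and "r (Suc k) = 1 \<or> r (Suc k) = -1"
    by (auto simp: sign_vec_def)
  with Suc.IH show ?case
    by (auto simp: sharp_Suc)
qed

lemma has_real_derivative_sum_monomials_at_1:
  "((\<lambda>x. \<Sum>k\<in>K. c k * x ^ m k) has_real_derivative (\<Sum>k\<in>K. c k * real (m k))) (at 1)"
  by (auto intro!: derivative_eq_intros simp: mult.commute)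

lemma exists_below_of_pos_deriv:
  fixes g :: "real \<Rightarrow> real"
  assumes "(g has_real_derivative D) (at a)" and "0 < D" and "b < a"
  shows "\<exists>x. b < x \<and> x < a \<and> g x < g a"
proof -
  obtain d where "d > 0" and d: "\<And>h. 0 < h \<Longrightarrow> h < d \<Longrightarrow> g (a - h) < g a"
    using DERIV_pos_inc_left[OF assms(1,2)] by blast
  define h where "h = min d (a - b) / 2"
  have "0 < h" "h < d" "h < a - b"
    using \<open>d > 0\<close> assms(3) by (auto simp: h_def min_def)
  then show ?thesis
    using d by (intro exI[of _ "a - h"]) auto
qed

lemma curve_poly_neg_on_edge_y1:
  assumes "sign_vec n s" and "sign_vec n t" and "sharp n s = sharp n t"
    and "(\<Sum>k=1..n. s k * int (sharp k s)) > (\<Sum>k=1..n. t k * int (sharp k t))"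
  shows "\<exists>x. 0 < x \<and> x < 1 \<and> curve_poly n s t x 1 < 0"
proof -
  define c :: "(nat \<Rightarrow> int) \<Rightarrow> real \<Rightarrow> real" where
    "c r x = (\<Sum>k=1..n. of_int (r k) * x ^ sharp k r)" for r x
  have edge: "curve_poly n s t x 1 = c s x - c t x" for x
    by (simp add: curve_poly_def c_def sum_subtractf)
  have "c r 1 = of_int (2 * int (sharp n r) - int n)" if "sign_vec n r" for r
    using sum_sign_vec[OF that] by (simp add: c_def flip: of_int_sum)
  then have vanish: "curve_poly n s t 1 1 = 0"
    using assms(1-3) by (simp add: edge)
  have "(\<Sum>k=1..n. of_int (r k) * real (sharp k r)) = (of_int (\<Sum>k=1..n. r k * int (sharp k r)) :: real)"
    for r by simp
  then have pos: "(\<Sum>k=1..n. of_int (s k) * real (sharp k s)) - (\<Sum>k=1..n. of_int (t k) * real (sharp k t)) > 0"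
    using assms(4) by (simp only: of_int_less_iff diff_gt_0_iff_gt)
  have deriv: "((\<lambda>x. c s x - c t x) has_real_derivative
      (\<Sum>k=1..n. of_int (s k) * real (sharp k s)) - (\<Sum>k=1..n. of_int (t k) * real (sharp k t))) (at 1)"
    unfolding c_def by (intro DERIV_diff has_real_derivative_sum_monomials_at_1)
  obtain x where "0 < x" "x < 1" "c s x - c t x < c s 1 - c t 1"
    using exists_below_of_pos_deriv[OF deriv pos zero_less_one] by blast
  with vanish show ?thesis
    by (auto simp: edge)
qed

lemma curve_poly_1_0:
  assumes "1 \<le> n" and "s 1 = 1" and "s 2 = -1" and "t 1 = -1"
  shows "curve_poly n s t 1 0 = 1"
proof -
  have "0 < tsharp k s" "0 < tsharp k t" if "k \<in> {2..n}" for k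
    using that assms(3,4) tsharp_pos[of 2 k s] tsharp_pos[of 1 k t] by auto
  then have "(\<Sum>k=2..n. of_int (s k) * 1 ^ sharp k s * (0::real) ^ tsharp k s
      - of_int (t k) * 1 ^ sharp k t * 0 ^ tsharp k t) = 0"
    by (intro sum.neutral ballI) (simp add: zero_power)
  moreover have "{1..n} = insert 1 {2..n}"
    using assms(1) by auto
  moreover have "tsharp 1 s = 0" "tsharp 1 t = 1"
    using sharp_1[of s] sharp_1[of t] assms(2,4) unfolding tsharp_def by simp_all
  ultimately show ?thesis
    using assms(2,4) by (simp add: curve_poly_def)
qed

theorem proposition3p1:
  fixes n :: nat and s t :: "nat \<Rightarrow> int"
  assumes "n \<ge> 3"
    and "sign_vec n s" and "sign_vec n t"
    and "\<exists>i\<in>{1..n}. s i \<noteq> t i"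
    and "sharp n s = sharp n t"
    and "s 1 = 1" and "s 2 = -1" and "t 1 = -1" and "t 2 = 1"
    and "(\<Sum>k=1..n. s k * int (sharp k s)) > (\<Sum>k=1..n. t k * int (sharp k t))"
  shows "\<exists>x y. 0 < x \<and> x < 1 \<and> 0 < y \<and> y < 1 \<and> x + y > 1 \<and> (x, y) \<in> curve n s t"
proof -
  obtain x0 where "0 < x0" "x0 < 1" and start: "curve_poly n s t x0 1 < 0"
    using curve_poly_neg_on_edge_y1 assms(2,3,5,10) by blast
  have vertex: "curve_poly n s t 1 0 = 1"
    using curve_poly_1_0 assms(1,6-8) by simp
  define \<phi> where "\<phi> u = curve_poly n s t ((1 - u) * x0 + u) (1 - u)" for u
  have "continuous_on {0..1} \<phi>"
    unfolding \<phi>_def curve_poly_def by (intro continuous_intros)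
  then obtain u where "0 \<le> u" "u \<le> 1" and zero: "\<phi> u = 0"
    using IVT'[of \<phi> 0 0 1] start vertex by (auto simp: \<phi>_def)
  then have "0 < u" "u < 1"
    using start vertex by (auto simp: \<phi>_def intro!: le_neq_trans)
  moreover have "0 < (1 - u) * x0" "(1 - u) * x0 < 1 - u"
    using \<open>0 < x0\<close> \<open>x0 < 1\<close> \<open>u < 1\<close> by simp_all
  ultimately show ?thesis
    using zero by (intro exI[of _ "(1 - u) * x0 + u"] exI[of _ "1 - u"]) (auto simp: \<phi>_def curve_def)
qed

end
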